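(* Let $A\in\mathbb{R}^{n\times n}$, $B\in\mathbb{R}^{n\times m}$, $C\in\mathbb{R}^{p\times n}$, $E\in\mathbb{R}^{n\times p}$, let $\Theta\subset\mathbb{R}^p$ be a convex compact set, let $w:[0,T]\to\mathbb{R}^m$ be integrable, and let $x(0)\in\mathbb{R}^n$ be fixed, where $T>0$. For $z_0\in\mathbb{R}^p$ let $x^{z_0}$ denote the solution on $[0,T]$ of $\dot{x}=Ax+Bw+Ez_0$ with initial value $x(0)$, and define the set of $T$-stationary initial conditions $$\mathfrak{R}(T):=\{z_0\in\mathbb{R}^p:\ z_0\in Cx^{z_0}(t)+\Theta\ \text{for all } t\in[0,T]\}.$$ Let $\Psi$ be the entire function $\Psi(u)=\int_0^1 e^{uv}\,dv$ (equal to $1$ at $u=0$ and $(e^u-1)/u$ otherwise), extended to square matrices via its power series, and set $$\Phi(t):=I_p-tC\Psi(tA)E\in\mathbb{R}^{p\times p}.$$ Suppose $\Phi(t)$ is nonsingular for all $t\in[0,T]$. Then $$\mathfrak{R}(T)=\bigcap_{0\le t\le T}\Phi(t)^{-1}\big(Cx_*(t)+\Theta\big),$$ where $x_*(t):=e^{tA}x(0)+\int_0^t e^{(t-s)A}Bw(s)\,ds$ is the solution of $\dot x=Ax+Bw$ with initial value $x(0)$.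
   Context: For a set $K\subset\mathbb{R}^p$ and a vector $c$, $c+K=\{c+k:k\in K\}$, and $M^{-1}(K)=\{M^{-1}k: k\in K\}$ for invertible $M$. The set $\mathfrak{R}(T)$ consists of those initial backlash outputs $z_0$ which, if held constant over $[0,T]$ as the feedback input of the linear system, always remain in $Cx(t)+\Theta$ (i.e. the backlash output stays at rest on $[0,T]$). *)

theory Defs
  imports "HOL-Analysis.Analysis"
begin

primrec mpow :: "real^'n^'n \<Rightarrow> nat \<Rightarrow> real^'n^'n" where
  "mpow M 0 = mat 1"
| "mpow M (Suc k) = M ** mpow M k"

definition mexp :: "real^'n^'n \<Rightarrow> real^'n^'n" where
  "mexp M = (\<Sum>k. (1 / fact k) *\<^sub>R mpow M k)"

text \<open>Psi(u) = int_0^1 e^{uv} dv = sum_k u^k/(k+1)!, extended to square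
  matrices via its power series.\<close>
definition Psi_mat :: "real^'n^'n \<Rightarrow> real^'n^'n" where
  "Psi_mat M = (\<Sum>k. (1 / fact (Suc k)) *\<^sub>R mpow M k)"

text \<open>x solves xdot = A x + B w + E z0 on [0,T] with x(0) = x0, in the
  (Caratheodory) integral sense.\<close>
definition solves_on ::
  "real^'n^'n \<Rightarrow> real^'m^'n \<Rightarrow> real^'p^'n \<Rightarrow> (real \<Rightarrow> real^'m) \<Rightarrow> real^'p
   \<Rightarrow> real^'n \<Rightarrow> real \<Rightarrow> (real \<Rightarrow> real^'n) \<Rightarrow> bool" where
  "solves_on A B E w z0 x0 T x \<longleftrightarrow>
     (\<forall>t\<in>{0..T}. ((\<lambda>s. A *v x s + B *v w s + E *v z0) has_integral (x t - x0)) {0..t})"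

definition sol ::
  "real^'n^'n \<Rightarrow> real^'m^'n \<Rightarrow> real^'p^'n \<Rightarrow> (real \<Rightarrow> real^'m) \<Rightarrow> real^'p
   \<Rightarrow> real^'n \<Rightarrow> real \<Rightarrow> real \<Rightarrow> real^'n" where
  "sol A B E w z0 x0 T =
     (THE x. solves_on A B E w z0 x0 T x \<and> (\<forall>t. t \<notin> {0..T} \<longrightarrow> x t = 0))"

definition stationary_set ::
  "real^'n^'n \<Rightarrow> real^'m^'n \<Rightarrow> real^'n^'p \<Rightarrow> real^'p^'n \<Rightarrow> (real^'p) set
   \<Rightarrow> (real \<Rightarrow> real^'m) \<Rightarrow> real^'n \<Rightarrow> real \<Rightarrow> (real^'p) set" where
  "stationary_set A B C E \<Theta> w x0 T =
     {z0. \<forall>t\<in>{0..T}. z0 \<in> (\<lambda>\<theta>. C *v sol A B E w z0 x0 T t + \<theta>) ` \<Theta>}"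

end

theory Submission
  imports Defs
begin

(* By variation of constants, the solution with the feedback input frozen at z0 is
   x^{z0}(t) = x_*(t) + t Psi(tA) E z0: indeed (t Psi(tA))' = e^{tA} = I + A t Psi(tA).
   Hence z0 - C x^{z0}(t) = Phi(t) z0 - C x_*(t), so z0 lies in C x^{z0}(t) + Theta exactly
   when Phi(t) z0 lies in C x_*(t) + Theta.
   As w is merely integrable, solutions are meant in the integral sense: that the formula is a
   solution needs Fubini on the triangle 0 <= r <= s <= t, and uniqueness holds because
   e^{(t - s)A} d(s) is constant for the difference d of two solutions. *)

section \<open>Matrix exponential series\<close>

lemma bounded_bilinear_matrix_matrix_mult:
  "bounded_bilinear ((**) :: real^'n^'m \<Rightarrow> real^'k^'n \<Rightarrow> real^'k^'m)"
  unfolding bilinear_conv_bounded_bilinear[symmetric] bilinear_def linear_iff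
  by (simp add: matrix_add_ldistrib matrix_scalar_ac scalar_matrix_assoc)
     (simp add: matrix_matrix_mult_def vec_eq_iff sum.distrib algebra_simps)

lemma bounded_bilinear_matrix_vector_mult:
  "bounded_bilinear ((*v) :: real^'n^'m \<Rightarrow> real^'n \<Rightarrow> real^'m)"
  unfolding bilinear_conv_bounded_bilinear[symmetric] bilinear_def linear_iff
  by (simp add: matrix_vector_right_distrib matrix_vector_mult_add_rdistrib
      matrix_vector_mult_scaleR scaleR_matrix_vector_assoc)

lemma mpow_scaleR: "mpow (c *\<^sub>R A) k = c ^ k *\<^sub>R mpow A k"
  by (induction k) (simp_all add: matrix_scalar_ac scalar_matrix_assoc mult.commute)

lemma mpow_Suc_right: "mpow A (Suc k) = mpow A k ** A"
  by (induction k) (simp_all add: matrix_mul_assoc)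

definition geometrically_bounded :: "(nat \<Rightarrow> 'a::real_normed_vector) \<Rightarrow> bool" where
  "geometrically_bounded c \<longleftrightarrow> (\<exists>K r. \<forall>k. norm (c k) \<le> K * r ^ k)"

lemma geometrically_bounded_mpow:
  fixes A :: "real^'n^'n"
  shows "geometrically_bounded (mpow A)"
proof -
  obtain K where "K \<ge> 0"
    and K: "\<And>(X::real^'n^'n) (Y::real^'n^'n). norm (X ** Y) \<le> norm X * norm Y * K"
    using bounded_bilinear.nonneg_bounded[OF bounded_bilinear_matrix_matrix_mult] by blast
  have "norm (mpow A k) \<le> norm (mat 1 :: real^'n^'n) * (norm A * K) ^ k" for k
  proof (induction k)
    case (Suc k)
    have "norm (mpow A (Suc k)) \<le> norm A * K * norm (mpow A k)"
      using K[of A "mpow A k"] by (simp add: mult_ac)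
    also have "\<dots> \<le> norm A * K * (norm (mat 1 :: real^'n^'n) * (norm A * K) ^ k)"
      using Suc \<open>K \<ge> 0\<close> by (intro mult_left_mono) auto
    finally show ?case by (simp add: mult_ac)
  qed simp
  then show ?thesis unfolding geometrically_bounded_def by blast
qed

lemma geometrically_bounded_shift:
  assumes "geometrically_bounded c"
  shows "geometrically_bounded (case_nat 0 c)"
proof -
  obtain K r where c: "\<And>k. norm (c k) \<le> K * r ^ k"
    using assms unfolding geometrically_bounded_def by blast
  have "norm (case_nat 0 c k) \<le> \<bar>K\<bar> * (\<bar>r\<bar> + 1) ^ k" for k
  proof (cases k)
    case (Suc j)
    have "norm (c j) \<le> \<bar>K\<bar> * \<bar>r\<bar> ^ j"
      using c[of j] abs_ge_self[of "K * r ^ j"] by (simp add: abs_mult power_abs)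
    also have "\<dots> \<le> \<bar>K\<bar> * (\<bar>r\<bar> + 1) ^ Suc j"
      by (intro mult_left_mono order_trans[OF power_mono power_increasing]) auto
    finally show ?thesis using Suc by simp
  qed simp
  then show ?thesis unfolding geometrically_bounded_def by blast
qed

lemma geometrically_bounded_bounded_linear:
  assumes "bounded_linear f" and "geometrically_bounded c"
  shows "geometrically_bounded (\<lambda>k. f (c k))"
proof -
  obtain K r where c: "\<And>k. norm (c k) \<le> K * r ^ k"
    using assms(2) unfolding geometrically_bounded_def by blast
  obtain L where L: "L \<ge> 0" "\<And>x. norm (f x) \<le> norm x * L"
    using bounded_linear.nonneg_bounded[OF assms(1)] by blast
  have "norm (f (c k)) \<le> (L * K) * r ^ k" for k
  proof -
    have "norm (f (c k)) \<le> norm (c k) * L" by (rule L(2))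
    also have "\<dots> \<le> K * r ^ k * L" by (rule mult_right_mono[OF c L(1)])
    finally show ?thesis by (simp add: mult_ac)
  qed
  then show ?thesis unfolding geometrically_bounded_def by blast
qed

lemma geometrically_bounded_Suc:
  assumes "geometrically_bounded c"
  shows "geometrically_bounded (\<lambda>k. c (Suc k))"
proof -
  obtain K r where c: "\<And>k. norm (c k) \<le> K * r ^ k"
    using assms unfolding geometrically_bounded_def by blast
  have "norm (c (Suc k)) \<le> (K * r) * r ^ k" for k
    using c[of "Suc k"] by (simp add: mult_ac)
  then show ?thesis unfolding geometrically_bounded_def by blast
qed

text \<open>Both e^{tA} and t Psi(tA) are of this form, with c k = A^k and with c 0 = 0,
  c (k + 1) = A^k respectively; this is how their derivatives are computed.\<close>

definition exp_series :: "(nat \<Rightarrow> 'a::banach) \<Rightarrow> real \<Rightarrow> 'a" where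
  "exp_series c t = (\<Sum>k. (t ^ k / fact k) *\<^sub>R c k)"

lemma summable_exp_series:
  fixes c :: "nat \<Rightarrow> 'a::banach"
  assumes "geometrically_bounded c"
  shows "summable (\<lambda>k. (t ^ k / fact k) *\<^sub>R c k)"
proof -
  obtain K r where c: "\<And>k. norm (c k) \<le> K * r ^ k"
    using assms unfolding geometrically_bounded_def by blast
  have bound: "norm ((t ^ k / fact k) *\<^sub>R c k) \<le> K * (inverse (fact k) * (\<bar>t\<bar> * r) ^ k)" for k
    using mult_left_mono[OF c[of k], of "\<bar>t\<bar> ^ k / fact k"]
    by (simp add: power_abs power_mult_distrib field_simps)
  have "summable (\<lambda>k. K * (inverse (fact k) * (\<bar>t\<bar> * r) ^ k))"
    by (intro summable_mult summable_exp)
  then show ?thesis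
    by (rule summable_comparison_test') (rule bound)
qed

lemma bounded_linear_exp_series:
  assumes "bounded_linear f" and "geometrically_bounded c"
  shows "f (exp_series c t) = exp_series (\<lambda>k. f (c k)) t"
  unfolding exp_series_def
  using bounded_linear.suminf[OF assms(1) summable_exp_series[OF assms(2)]]
  by (simp add: linear_scale[OF bounded_linear.linear[OF assms(1)]])

lemma exp_series_0: "exp_series c 0 = c 0"
proof -
  have "(\<lambda>k. (0 ^ k / fact k) *\<^sub>R c k) = (\<lambda>k. if k = 0 then c 0 else 0)"
    by (auto simp: fun_eq_iff)
  then show ?thesis
    unfolding exp_series_def using sums_single[of 0 "\<lambda>_. c 0"] sums_unique by fastforce
qed

lemma exp_series_split_head:
  assumes "geometrically_bounded c"
  shows "exp_series c t = c 0 + exp_series (case_nat 0 (\<lambda>k. c (Suc k))) t"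
proof -
  let ?f = "\<lambda>k. (t ^ k / fact k) *\<^sub>R c k"
  let ?g = "\<lambda>k. (t ^ k / fact k) *\<^sub>R case_nat 0 (\<lambda>k. c (Suc k)) k"
  have "?f sums exp_series c t"
    unfolding exp_series_def by (rule summable_sums[OF summable_exp_series[OF assms]])
  then have "(\<lambda>k. ?f (Suc k)) sums (exp_series c t - ?f 0)"
    by (intro sums_Suc_iff[THEN iffD2]) simp
  then have "?g sums (exp_series c t - c 0 + ?g 0)"
    by (intro sums_Suc_iff[THEN iffD1]) simp
  then show ?thesis by (simp add: exp_series_def sums_iff)
qed

lemma exp_series_has_real_derivative:
  fixes c :: "nat \<Rightarrow> real"
  assumes "geometrically_bounded c"
  shows "(exp_series c has_real_derivative exp_series (\<lambda>k. c (Suc k)) t) (at t)"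
proof -
  define a where "a k = c k / fact k" for k
  have power_series: "exp_series d = (\<lambda>s. \<Sum>k. (d k / fact k) * s ^ k)" for d
    unfolding exp_series_def by (simp add: fun_eq_iff ac_simps)
  have "((\<lambda>s. \<Sum>k. a k * s ^ k) has_real_derivative (\<Sum>k. diffs a k * t ^ k)) (at t)"
    by (rule termdiffs_strong_converges_everywhere)
       (use summable_exp_series[OF assms] in \<open>simp add: a_def ac_simps\<close>)
  moreover have "diffs a k = c (Suc k) / fact k" for k
    by (simp add: diffs_def a_def fact_Suc del: of_nat_Suc)
  ultimately show ?thesis
    by (simp add: power_series a_def[abs_def])
qed

lemma exp_series_has_vector_derivative:
  fixes c :: "nat \<Rightarrow> 'a::euclidean_space"
  assumes "geometrically_bounded c"
  shows "(exp_series c has_vector_derivative exp_series (\<lambda>k. c (Suc k)) t) (at t within S)"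
  unfolding has_vector_derivative_def
proof (subst has_derivative_componentwise_within, intro ballI)
  fix b :: 'a
  have component: "exp_series d s \<bullet> b = exp_series (\<lambda>k. d k \<bullet> b) s"
    if "geometrically_bounded d" for d s
    by (rule bounded_linear_exp_series[OF bounded_linear_inner_left that])
  have "(exp_series (\<lambda>k. c k \<bullet> b) has_real_derivative exp_series (\<lambda>k. c (Suc k) \<bullet> b) t) (at t)"
    by (rule exp_series_has_real_derivative
        [OF geometrically_bounded_bounded_linear[OF bounded_linear_inner_left assms]])
  then have "((\<lambda>s. exp_series c s \<bullet> b) has_real_derivative exp_series (\<lambda>k. c (Suc k)) t \<bullet> b) (at t)"
    by (simp only: component assms geometrically_bounded_Suc)
  moreover have "(\<lambda>h. (h *\<^sub>R v) \<bullet> b) = (*) (v \<bullet> b)" for v :: 'a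
    by (auto simp: fun_eq_iff)
  ultimately show "((\<lambda>s. exp_series c s \<bullet> b) has_derivative
      (\<lambda>h. (h *\<^sub>R exp_series (\<lambda>k. c (Suc k)) t) \<bullet> b)) (at t within S)"
    by (simp add: has_field_derivative_def has_derivative_at_withinI)
qed

lemma mexp_eq_exp_series: "mexp (t *\<^sub>R A) = exp_series (mpow A) t"
  unfolding mexp_def exp_series_def by (simp add: mpow_scaleR)

lemma mexp_zero [simp]: "mexp 0 = mat 1"
  using mexp_eq_exp_series[of 0] by (simp add: exp_series_0)

lemma Psi_mat_eq_exp_series: "t *\<^sub>R Psi_mat (t *\<^sub>R A) = exp_series (case_nat 0 (mpow A)) t"
proof (cases "t = 0")
  case False
  let ?h = "\<lambda>k. (t ^ k / fact k) *\<^sub>R case_nat 0 (mpow A) k"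
  have "?h sums exp_series (case_nat 0 (mpow A)) t"
    unfolding exp_series_def
    by (intro summable_sums summable_exp_series geometrically_bounded_shift
        geometrically_bounded_mpow)
  then have "(\<lambda>k. ?h (Suc k)) sums exp_series (case_nat 0 (mpow A)) t"
    by (subst sums_Suc_iff) simp
  then have "(\<lambda>k. (1 / t) *\<^sub>R ?h (Suc k)) sums ((1 / t) *\<^sub>R exp_series (case_nat 0 (mpow A)) t)"
    by (rule sums_scaleR_right)
  moreover have "(1 / t) *\<^sub>R ?h (Suc k) = (1 / fact (Suc k)) *\<^sub>R mpow (t *\<^sub>R A) k" for k
    using False by (simp add: mpow_scaleR)
  ultimately show ?thesis
    using False by (simp add: Psi_mat_def sums_iff)
qed (simp add: exp_series_0)

lemma mexp_has_vector_derivative: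
  "((\<lambda>t. mexp (t *\<^sub>R A)) has_vector_derivative mexp (t *\<^sub>R A) ** A) (at t within S)"
proof -
  have "exp_series (\<lambda>k. mpow A (Suc k)) t = mexp (t *\<^sub>R A) ** A"
    unfolding mexp_eq_exp_series mpow_Suc_right
    by (rule bounded_linear_exp_series[symmetric, OF _ geometrically_bounded_mpow])
       (rule bounded_bilinear.bounded_linear_left[OF bounded_bilinear_matrix_matrix_mult])
  then show ?thesis
    unfolding mexp_eq_exp_series
    using exp_series_has_vector_derivative[OF geometrically_bounded_mpow] by metis
qed

lemma mexp_has_vector_derivative_compose:
  assumes "(f has_vector_derivative f') (at s within S)"
  shows "((\<lambda>s. mexp (f s *\<^sub>R A)) has_vector_derivative f' *\<^sub>R (mexp (f s *\<^sub>R A) ** A))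
    (at s within S)"
  using vector_diff_chain_within[OF assms mexp_has_vector_derivative] by (simp add: o_def)

lemma mexp_commute: "A ** mexp (t *\<^sub>R A) = mexp (t *\<^sub>R A) ** A"
proof -
  have "A ** exp_series (mpow A) t = exp_series (\<lambda>k. A ** mpow A k) t"
    by (intro bounded_linear_exp_series geometrically_bounded_mpow
        bounded_bilinear.bounded_linear_right[OF bounded_bilinear_matrix_matrix_mult])
  moreover have "exp_series (mpow A) t ** A = exp_series (\<lambda>k. mpow A k ** A) t"
    by (intro bounded_linear_exp_series geometrically_bounded_mpow
        bounded_bilinear.bounded_linear_left[OF bounded_bilinear_matrix_matrix_mult])
  moreover have "A ** mpow A k = mpow A k ** A" for k
    using mpow_Suc_right[of A k] by simp
  ultimately show ?thesis by (simp add: mexp_eq_exp_series)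
qed

lemma Psi_mat_has_vector_derivative:
  "((\<lambda>t. t *\<^sub>R Psi_mat (t *\<^sub>R A)) has_vector_derivative mexp (t *\<^sub>R A)) (at t within S)"
  unfolding Psi_mat_eq_exp_series mexp_eq_exp_series
  using exp_series_has_vector_derivative
      [OF geometrically_bounded_shift[OF geometrically_bounded_mpow]]
  by simp

lemma mexp_eq_Psi_mat: "mexp (t *\<^sub>R A) = mat 1 + A ** (t *\<^sub>R Psi_mat (t *\<^sub>R A))"
proof -
  have "mexp (t *\<^sub>R A) = mat 1 + exp_series (case_nat 0 (\<lambda>k. mpow A (Suc k))) t"
    using exp_series_split_head[OF geometrically_bounded_mpow, of A t]
    by (simp only: mexp_eq_exp_series mpow.simps(1))
  also have "case_nat 0 (\<lambda>k. mpow A (Suc k)) = (\<lambda>k. A ** case_nat 0 (mpow A) k)"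
    by (simp add: fun_eq_iff split: nat.split)
  also have "exp_series \<dots> t = A ** exp_series (case_nat 0 (mpow A)) t"
    by (intro bounded_linear_exp_series[symmetric] geometrically_bounded_shift
        geometrically_bounded_mpow
        bounded_bilinear.bounded_linear_right[OF bounded_bilinear_matrix_matrix_mult])
  finally show ?thesis
    by (simp only: Psi_mat_eq_exp_series)
qed

lemma continuous_on_mexp: "continuous_on S (\<lambda>t. mexp (t *\<^sub>R A))"
  by (rule continuous_on_vector_derivative) (rule mexp_has_vector_derivative)

section \<open>Uniqueness of solutions\<close>

lemma linear_integral_equation_has_vector_derivative:
  fixes A :: "real^'n^'n" and d :: "real \<Rightarrow> real^'n"
  assumes d: "\<And>\<tau>. \<tau> \<in> {0..T} \<Longrightarrow> ((\<lambda>s. A *v d s) has_integral d \<tau>) {0..\<tau>}"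
    and t: "t \<in> {0..T}"
  shows "(d has_vector_derivative A *v d t) (at t within {0..T})"
proof -
  have d_eq: "d \<tau> = integral {0..\<tau>} (\<lambda>s. A *v d s)" if "\<tau> \<in> {0..T}" for \<tau>
    using d[OF that] by (simp add: integral_unique)
  have "continuous_on {0..T} (\<lambda>\<tau>. integral {0..\<tau>} (\<lambda>s. A *v d s))"
    by (rule indefinite_integral_continuous_1) (use d[of T] t in auto)
  then have "continuous_on {0..T} d"
    by (rule continuous_on_eq) (simp add: d_eq)
  then have "continuous_on {0..T} (\<lambda>s. A *v d s)"
    by (rule bounded_linear.continuous_on[OF matrix_vector_mul_bounded_linear])
  then have "((\<lambda>u. integral {0..u} (\<lambda>s. A *v d s)) has_vector_derivative A *v d t)
      (at t within {0..T})"
    using t by (rule integral_has_vector_derivative)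
  with t d_eq show ?thesis
    by (rule has_vector_derivative_transform)
qed

lemma linear_integral_equation_zero:
  fixes A :: "real^'n^'n" and d :: "real \<Rightarrow> real^'n"
  assumes d: "\<And>\<tau>. \<tau> \<in> {0..T} \<Longrightarrow> ((\<lambda>s. A *v d s) has_integral d \<tau>) {0..\<tau>}"
    and t: "t \<in> {0..T}"
  shows "d t = 0"
proof -
  have d': "(d has_vector_derivative A *v d s) (at s within {0..t})" if "s \<in> {0..t}" for s
    using that t
    by (intro has_vector_derivative_within_subset
        [OF linear_integral_equation_has_vector_derivative[OF d]]) auto
  define h where "h s = mexp ((t - s) *\<^sub>R A) *v d s" for s
  have "(h has_derivative (\<lambda>_. 0)) (at s within {0..t})" if s: "s \<in> {0..t}" for s
  proof -
    have "((\<lambda>s. mexp ((t - s) *\<^sub>R A)) has_vector_derivative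
        (-1) *\<^sub>R (mexp ((t - s) *\<^sub>R A) ** A)) (at s within {0..t})"
      by (intro mexp_has_vector_derivative_compose derivative_eq_intros) auto
    from bounded_bilinear.has_vector_derivative[OF bounded_bilinear_matrix_vector_mult this d'[OF s]]
    have "(h has_vector_derivative 0) (at s within {0..t})"
      by (simp add: h_def[abs_def] matrix_vector_mul_assoc
          bounded_bilinear.minus_left[OF bounded_bilinear_matrix_vector_mult])
    then show ?thesis
      by (simp add: has_vector_derivative_def)
  qed
  then obtain c where "\<forall>s\<in>{0..t}. h s = c"
    using has_derivative_zero_constant[of "{0..t}" h] by auto
  then have "h t = h 0"
    using t by auto
  moreover have "d 0 = 0"
    using integral_unique[OF d[of 0]] t by simp
  ultimately show ?thesis
    by (simp add: h_def)
qed

section \<open>Fubini on a triangle\<close>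

lemma sigma_finite_lebesgue: "sigma_finite_measure (lebesgue :: 'a::euclidean_space measure)"
proof
  obtain A :: "'a set set" where "countable A" "A \<subseteq> sets lborel" "\<Union>A = space lborel"
    "\<forall>a\<in>A. emeasure lborel a \<noteq> \<infinity>"
    using lborel.sigma_finite_countable by blast
  then show "\<exists>A::'a set set. countable A \<and> A \<subseteq> sets lebesgue \<and> \<Union>A = space lebesgue \<and>
      (\<forall>a\<in>A. emeasure lebesgue a \<noteq> \<infinity>)"
    by (intro exI[of _ A]) (auto simp: main_part_sets)
qed

lemma pair_sigma_finite_lebesgue:
  "pair_sigma_finite (lebesgue :: 'a::euclidean_space measure)
    (lebesgue :: 'b::euclidean_space measure)"
  by (intro pair_sigma_finite.intro sigma_finite_lebesgue)

lemma measurable_fst_lebesgue [measurable]: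
  "fst \<in> borel_measurable
    ((lebesgue :: 'a::euclidean_space measure) \<Otimes>\<^sub>M (lebesgue :: 'b::euclidean_space measure))"
  using measurable_compose[OF measurable_fst id_borel_measurable_lebesgue] by (simp add: id_def)

lemma measurable_snd_lebesgue [measurable]:
  "snd \<in> borel_measurable
    ((lebesgue :: 'a::euclidean_space measure) \<Otimes>\<^sub>M (lebesgue :: 'b::euclidean_space measure))"
  using measurable_compose[OF measurable_snd id_borel_measurable_lebesgue] by (simp add: id_def)

lemma integral_triangle_swap:
  fixes f :: "real \<Rightarrow> real \<Rightarrow> 'a::euclidean_space"
  assumes int: "integrable (lebesgue \<Otimes>\<^sub>M lebesgue)
      (\<lambda>(r, s). if 0 \<le> r \<and> r \<le> s \<and> s \<le> t then f r s else 0)"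
    and inner: "\<And>s. s \<in> {0..t} \<Longrightarrow> (\<lambda>r. f r s) absolutely_integrable_on {0..s}"
    and outer: "\<And>r. r \<in> {0..t} \<Longrightarrow> f r absolutely_integrable_on {r..t}"
  shows "(\<lambda>s. integral {0..s} (\<lambda>r. f r s)) integrable_on {0..t}"
    and "integral {0..t} (\<lambda>s. integral {0..s} (\<lambda>r. f r s))
      = integral {0..t} (\<lambda>r. integral {r..t} (f r))"
proof -
  interpret pair_sigma_finite lebesgue "lebesgue :: real measure"
    by (rule pair_sigma_finite_lebesgue)
  define F where "F r s = (if 0 \<le> r \<and> r \<le> s \<and> s \<le> t then f r s else 0)" for r s
  have "F r s = indicator {0..t} s *\<^sub>R indicator {0..s} r *\<^sub>R f r s" for r s
    by (auto simp: F_def indicator_def)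
  then have inner_integral:
      "(\<integral>r. F r s \<partial>lebesgue) = indicator {0..t} s *\<^sub>R integral {0..s} (\<lambda>r. f r s)" for s
    using set_lebesgue_integral_eq_integral(2)[OF inner, of s]
    by (cases "s \<in> {0..t}") (simp_all add: set_lebesgue_integral_def)
  have "F r s = indicator {0..t} r *\<^sub>R indicator {r..t} s *\<^sub>R f r s" for r s
    by (auto simp: F_def indicator_def)
  then have outer_integral:
      "(\<integral>s. F r s \<partial>lebesgue) = indicator {0..t} r *\<^sub>R integral {r..t} (f r)" for r
    using set_lebesgue_integral_eq_integral(2)[OF outer, of r]
    by (cases "r \<in> {0..t}") (simp_all add: set_lebesgue_integral_def)
  have int': "integrable (lebesgue \<Otimes>\<^sub>M lebesgue) (case_prod F)"
    using int by (simp add: F_def[abs_def])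
  have I1: "set_integrable lebesgue {0..t} (\<lambda>s. integral {0..s} (\<lambda>r. f r s))"
    using integrable_snd[OF int'] unfolding set_integrable_def inner_integral by simp
  have I2: "set_integrable lebesgue {0..t} (\<lambda>r. integral {r..t} (f r))"
    using integrable_fst[OF int'] unfolding set_integrable_def outer_integral by simp
  show "(\<lambda>s. integral {0..s} (\<lambda>r. f r s)) integrable_on {0..t}"
    by (rule set_lebesgue_integral_eq_integral(1)[OF I1])
  have "integral {0..t} (\<lambda>s. integral {0..s} (\<lambda>r. f r s)) = (\<integral>s. \<integral>r. F r s \<partial>lebesgue \<partial>lebesgue)"
    using set_lebesgue_integral_eq_integral(2)[OF I1]
    unfolding set_lebesgue_integral_def inner_integral by simp
  also have "\<dots> = (\<integral>r. \<integral>s. F r s \<partial>lebesgue \<partial>lebesgue)"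
    using Fubini_integral[OF int'] by simp
  also have "\<dots> = integral {0..t} (\<lambda>r. integral {r..t} (f r))"
    using set_lebesgue_integral_eq_integral(2)[OF I2]
    unfolding set_lebesgue_integral_def outer_integral by simp
  finally show "integral {0..t} (\<lambda>s. integral {0..s} (\<lambda>r. f r s))
      = integral {0..t} (\<lambda>r. integral {r..t} (f r))" .
qed

lemma matrix_vector_mult_bound_on_compact:
  fixes K :: "real \<Rightarrow> real^'n^'m"
  assumes "continuous_on {a..b} K"
  obtains C where "C \<ge> 0" and "\<And>\<tau> v. \<tau> \<in> {a..b} \<Longrightarrow> norm (K \<tau> *v v) \<le> C * norm v"
proof -
  obtain B where "\<forall>x\<in>K ` {a..b}. norm x \<le> B"
    using compact_imp_bounded[OF compact_continuous_image[OF assms]]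
    unfolding bounded_iff by auto
  then have B: "\<And>\<tau>. \<tau> \<in> {a..b} \<Longrightarrow> norm (K \<tau>) \<le> B"
    by blast
  obtain L where L: "L \<ge> 0" "\<And>(X::real^'n^'m) v. norm (X *v v) \<le> norm X * norm v * L"
    using bounded_bilinear.nonneg_bounded[OF bounded_bilinear_matrix_vector_mult] by blast
  have "norm (K \<tau> *v v) \<le> (max B 0 * L) * norm v" if "\<tau> \<in> {a..b}" for \<tau> v
  proof -
    have "norm (K \<tau> *v v) \<le> norm (K \<tau>) * norm v * L" by (rule L(2))
    also have "\<dots> \<le> max B 0 * norm v * L"
      using B[OF that] L(1) by (intro mult_right_mono) auto
    finally show ?thesis by (simp add: mult_ac)
  qed
  with L(1) show ?thesis
    by (intro that[of "max B 0 * L"]) auto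
qed

lemma absolutely_integrable_matrix_vector_mult:
  fixes u :: "real \<Rightarrow> real^'n" and K :: "real \<Rightarrow> real^'n^'m"
  assumes u: "u absolutely_integrable_on {a..b}" and K: "continuous_on {a..b} K"
  shows "(\<lambda>r. K r *v u r) absolutely_integrable_on {a..b}"
proof -
  have "bilinear ((*v) :: real^'n^'m \<Rightarrow> real^'n \<Rightarrow> real^'m)"
    using bounded_bilinear_matrix_vector_mult bilinear_conv_bounded_bilinear by blast
  moreover have "K \<in> borel_measurable (lebesgue_on {a..b})"
    by (intro continuous_imp_measurable_on_sets_lebesgue K) auto
  moreover have "bounded (K ` {a..b})"
    by (intro compact_imp_bounded compact_continuous_image K compact_Icc)
  ultimately show ?thesis
    using absolutely_integrable_bounded_measurable_product[OF _ _ _ _ u] by auto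
qed

lemma (in pair_sigma_finite) integrable_product_bound:
  fixes F :: "'a \<times> 'b \<Rightarrow> 'c::{banach, second_countable_topology}"
  assumes F: "F \<in> borel_measurable (M1 \<Otimes>\<^sub>M M2)"
    and g: "integrable M1 g" and h: "integrable M2 h"
    and bound: "\<And>x y. norm (F (x, y)) \<le> g x * h y"
  shows "integrable (M1 \<Otimes>\<^sub>M M2) F"
proof (rule Fubini_integrable[OF F])
  have "integrable M2 (\<lambda>y. F (x, y))" if "x \<in> space M1" for x
  proof (rule Bochner_Integration.integrable_bound[OF integrable_mult_right[OF h, of "g x"]])
    show "(\<lambda>y. F (x, y)) \<in> borel_measurable M2"
      using F that by measurable
    show "AE y in M2. norm (F (x, y)) \<le> norm (g x * h y)"
      using order_trans[OF bound abs_ge_self] by simp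
  qed
  then show "AE x in M1. integrable M2 (\<lambda>y. F (x, y))"
    by (rule AE_I2)
  have "0 \<le> g x * h y" for x y
    by (rule order_trans[OF norm_ge_zero bound])
  then have "(\<integral>y. norm (F (x, y)) \<partial>M2) \<le> g x * integral\<^sup>L M2 h" for x
    using integral_mono'[OF integrable_mult_right[OF h, of "g x"] bound] by simp
  moreover have "0 \<le> (\<integral>y. norm (F (x, y)) \<partial>M2)" for x
    by (intro integral_nonneg_AE) simp
  ultimately have "norm (\<integral>y. norm (F (x, y)) \<partial>M2) \<le> norm (g x * integral\<^sup>L M2 h)" for x
    by (auto simp: abs_of_nonneg intro: order_trans[OF _ abs_ge_self])
  then show "integrable M1 (\<lambda>x. \<integral>y. norm (F (x, y)) \<partial>M2)"
  proof (intro Bochner_Integration.integrable_bound[OF integrable_mult_left[OF g]] AE_I2)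
    show "(\<lambda>x. \<integral>y. norm (F (x, y)) \<partial>M2) \<in> borel_measurable M1"
      using F by measurable
  qed
qed

lemma integrable_convolution_triangle:
  fixes u :: "real \<Rightarrow> real^'n" and K :: "real \<Rightarrow> real^'n^'m"
  assumes u: "u absolutely_integrable_on {0..t}" and K: "continuous_on UNIV K"
  shows "integrable (lebesgue \<Otimes>\<^sub>M lebesgue)
    (\<lambda>(r, s). if 0 \<le> r \<and> r \<le> s \<and> s \<le> t then K (s - r) *v u r else 0)"
proof -
  interpret pair_sigma_finite lebesgue "lebesgue :: real measure"
    by (rule pair_sigma_finite_lebesgue)
  define u' where "u' r = indicator {0..t} r *\<^sub>R u r" for r
  have u'_int: "integrable lebesgue u'"
    using u by (simp add: set_integrable_def u'_def[abs_def])
  then have [measurable]: "u' \<in> borel_measurable lebesgue"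
    by auto
  have [measurable]: "K \<in> borel_measurable borel"
    by (rule borel_measurable_continuous_onI[OF K])
  obtain C where "C \<ge> 0" and C: "\<And>\<tau> v. \<tau> \<in> {0..t} \<Longrightarrow> norm (K \<tau> *v v) \<le> C * norm v"
    using matrix_vector_mult_bound_on_compact[OF continuous_on_subset[OF K]] by blast
  define F where "F r s = (if 0 \<le> r \<and> r \<le> s \<and> s \<le> t then K (s - r) *v u' r else 0)" for r s
  have "(\<lambda>p. K (snd p - fst p) *v u' (fst p)) \<in> borel_measurable (lebesgue \<Otimes>\<^sub>M lebesgue)"
    by (rule borel_measurable_continuous_Pair[where H="(*v)"])
       (measurable, rule bounded_bilinear.continuous_on[OF bounded_bilinear_matrix_vector_mult],
        auto intro: continuous_intros)
  then have "case_prod F \<in> borel_measurable (lebesgue \<Otimes>\<^sub>M lebesgue)"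
    unfolding F_def split_beta' by measurable
  moreover have "integrable lebesgue (indicator {0..t} :: real \<Rightarrow> real)"
    using lmeasurable_cbox[of 0 t]
    by (auto intro!: integrable_real_indicator fmeasurableD simp: emeasure_lborel_Icc_eq)
  moreover have "norm (case_prod F (r, s)) \<le> C * norm (u' r) * indicator {0..t} s" for r s
    using C[of "s - r" "u' r"] \<open>C \<ge> 0\<close> by (auto simp: F_def indicator_def)
  ultimately have "integrable (lebesgue \<Otimes>\<^sub>M lebesgue) (case_prod F)"
    using u'_int
    by (intro integrable_product_bound[where g = "\<lambda>r. C * norm (u' r)" and h = "indicator {0..t}"])
      auto
  moreover have "case_prod F = (\<lambda>(r, s). if 0 \<le> r \<and> r \<le> s \<and> s \<le> t then K (s - r) *v u r else 0)"
    by (auto simp: fun_eq_iff F_def u'_def)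
  ultimately show ?thesis
    by simp
qed

lemma convolution_triangle_swap:
  fixes u :: "real \<Rightarrow> real^'n" and K :: "real \<Rightarrow> real^'n^'m"
  assumes u: "u absolutely_integrable_on {0..t}" and K: "continuous_on UNIV K"
  shows "(\<lambda>s. integral {0..s} (\<lambda>r. K (s - r) *v u r)) integrable_on {0..t}"
    and "integral {0..t} (\<lambda>s. integral {0..s} (\<lambda>r. K (s - r) *v u r))
      = integral {0..t} (\<lambda>r. integral {r..t} (\<lambda>s. K (s - r) *v u r))"
proof -
  have inner: "(\<lambda>r. K (s - r) *v u r) absolutely_integrable_on {0..s}" if "s \<in> {0..t}" for s
    using that
    by (intro absolutely_integrable_matrix_vector_mult set_integrable_subset[OF u]
        continuous_on_compose2[OF K] continuous_intros) auto
  have outer: "(\<lambda>s. K (s - r) *v u r) absolutely_integrable_on {r..t}" for r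
    by (intro absolutely_integrable_continuous_real
        bounded_bilinear.continuous_on[OF bounded_bilinear_matrix_vector_mult]
        continuous_on_compose2[OF K] continuous_intros) auto
  note swap = integral_triangle_swap[where f = "\<lambda>r s. K (s - r) *v u r",
      OF integrable_convolution_triangle[OF u K] inner outer]
  show "(\<lambda>s. integral {0..s} (\<lambda>r. K (s - r) *v u r)) integrable_on {0..t}"
    by (rule swap(1))
  show "integral {0..t} (\<lambda>s. integral {0..s} (\<lambda>r. K (s - r) *v u r))
      = integral {0..t} (\<lambda>r. integral {r..t} (\<lambda>s. K (s - r) *v u r))"
    by (rule swap(2))
qed

section \<open>Variation of constants\<close>

lemma integral_mexp_derivative:
  assumes "r \<le> t"
  shows "integral {r..t} (\<lambda>s. (A ** mexp ((s - r) *\<^sub>R A)) *v v) = mexp ((t - r) *\<^sub>R A) *v v - v"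
proof -
  have "((\<lambda>s. s - r) has_vector_derivative 1) (at s within {r..t})" for s
    by (auto intro!: derivative_eq_intros)
  then have "((\<lambda>s. mexp ((s - r) *\<^sub>R A)) has_vector_derivative mexp ((s - r) *\<^sub>R A) ** A)
      (at s within {r..t})" for s
    using mexp_has_vector_derivative_compose by fastforce
  then have "((\<lambda>s. mexp ((s - r) *\<^sub>R A) *v v) has_vector_derivative
      (mexp ((s - r) *\<^sub>R A) ** A) *v v) (at s within {r..t})" for s
    by (rule bounded_linear.has_vector_derivative[OF
        bounded_bilinear.bounded_linear_left[OF bounded_bilinear_matrix_vector_mult]])
  from fundamental_theorem_of_calculus[OF assms this] show ?thesis
    by (simp add: integral_unique mexp_commute)
qed

lemma integral_A_convolution:
  fixes A :: "real^'n^'n" and u :: "real \<Rightarrow> real^'n"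
  assumes u: "u absolutely_integrable_on {0..t}"
  shows "(\<lambda>s. A *v integral {0..s} (\<lambda>r. mexp ((s - r) *\<^sub>R A) *v u r)) integrable_on {0..t}"
    and "integral {0..t} (\<lambda>s. A *v integral {0..s} (\<lambda>r. mexp ((s - r) *\<^sub>R A) *v u r))
      = integral {0..t} (\<lambda>r. mexp ((t - r) *\<^sub>R A) *v u r) - integral {0..t} u"
proof -
  define K where "K \<tau> = A ** mexp (\<tau> *\<^sub>R A)" for \<tau>
  have K: "continuous_on UNIV K"
    unfolding K_def
    by (rule bounded_linear.continuous_on[OF _ continuous_on_mexp])
       (rule bounded_bilinear.bounded_linear_right[OF bounded_bilinear_matrix_matrix_mult])
  have conv_integrable: "(\<lambda>r. mexp ((s - r) *\<^sub>R A) *v u r) absolutely_integrable_on {0..s}"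
    if "s \<le> t" for s
    using that
    by (intro absolutely_integrable_matrix_vector_mult set_integrable_subset[OF u]
        continuous_on_compose2[OF continuous_on_mexp[of UNIV]] continuous_intros) auto
  note swap = convolution_triangle_swap[OF u K]
  have A_conv: "A *v integral {0..s} (\<lambda>r. mexp ((s - r) *\<^sub>R A) *v u r)
      = integral {0..s} (\<lambda>r. K (s - r) *v u r)" if "s \<in> {0..t}" for s
    using integral_linear[OF set_lebesgue_integral_eq_integral(1)[OF conv_integrable]
        matrix_vector_mul_bounded_linear[of A]] that
    by (simp add: K_def o_def matrix_vector_mul_assoc)
  have "(\<lambda>s. A *v integral {0..s} (\<lambda>r. mexp ((s - r) *\<^sub>R A) *v u r)) integrable_on {0..t}
      \<longleftrightarrow> (\<lambda>s. integral {0..s} (\<lambda>r. K (s - r) *v u r)) integrable_on {0..t}"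
    by (rule integrable_cong) (rule A_conv)
  with swap(1)
  show "(\<lambda>s. A *v integral {0..s} (\<lambda>r. mexp ((s - r) *\<^sub>R A) *v u r)) integrable_on {0..t}"
    by simp
  have "integral {0..t} (\<lambda>s. A *v integral {0..s} (\<lambda>r. mexp ((s - r) *\<^sub>R A) *v u r))
      = integral {0..t} (\<lambda>s. integral {0..s} (\<lambda>r. K (s - r) *v u r))"
    by (rule integral_cong) (rule A_conv)
  also have "\<dots> = integral {0..t} (\<lambda>r. integral {r..t} (\<lambda>s. K (s - r) *v u r))"
    by (rule swap(2))
  also have "\<dots> = integral {0..t} (\<lambda>r. mexp ((t - r) *\<^sub>R A) *v u r - u r)"
    by (intro integral_cong) (simp add: K_def integral_mexp_derivative)
  also have "\<dots> = integral {0..t} (\<lambda>r. mexp ((t - r) *\<^sub>R A) *v u r) - integral {0..t} u"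
    using conv_integrable[of t] u
    by (intro integral_diff set_lebesgue_integral_eq_integral(1)) auto
  finally show "integral {0..t} (\<lambda>s. A *v integral {0..s} (\<lambda>r. mexp ((s - r) *\<^sub>R A) *v u r))
      = integral {0..t} (\<lambda>r. mexp ((t - r) *\<^sub>R A) *v u r) - integral {0..t} u" .
qed

lemma variation_of_constants:
  fixes A :: "real^'n^'n" and u :: "real \<Rightarrow> real^'n"
  assumes u: "u absolutely_integrable_on {0..t}"
  shows "((\<lambda>s. A *v integral {0..s} (\<lambda>r. mexp ((s - r) *\<^sub>R A) *v u r) + u s) has_integral
      integral {0..t} (\<lambda>r. mexp ((t - r) *\<^sub>R A) *v u r)) {0..t}"
proof -
  have "((\<lambda>s. A *v integral {0..s} (\<lambda>r. mexp ((s - r) *\<^sub>R A) *v u r) + u s) has_integral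
      integral {0..t} (\<lambda>r. mexp ((t - r) *\<^sub>R A) *v u r) - integral {0..t} u + integral {0..t} u)
      {0..t}"
    unfolding integral_A_convolution(2)[OF u, symmetric]
    by (intro has_integral_add integrable_integral integral_A_convolution(1)[OF u]
        set_lebesgue_integral_eq_integral(1)[OF u])
  then show ?thesis
    by simp
qed

lemma has_integral_mexp:
  assumes "0 \<le> t"
  shows "((\<lambda>s. A *v (mexp (s *\<^sub>R A) *v v)) has_integral (mexp (t *\<^sub>R A) *v v - v)) {0..t}"
proof -
  have "((\<lambda>s. (mexp (s *\<^sub>R A) ** A) *v v) has_integral
      (mexp (t *\<^sub>R A) *v v - mexp (0 *\<^sub>R A) *v v)) {0..t}"
    using assms by (intro fundamental_theorem_of_calculus bounded_linear.has_vector_derivative[OF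
          bounded_bilinear.bounded_linear_left[OF bounded_bilinear_matrix_vector_mult]]
        mexp_has_vector_derivative) auto
  then show ?thesis
    by (simp add: matrix_vector_mul_assoc mexp_commute)
qed

lemma has_integral_Psi_mat:
  assumes "0 \<le> t"
  shows "((\<lambda>s. A *v ((s *\<^sub>R Psi_mat (s *\<^sub>R A)) *v v) + v) has_integral
    (t *\<^sub>R Psi_mat (t *\<^sub>R A)) *v v) {0..t}"
proof -
  have "((\<lambda>s. mexp (s *\<^sub>R A) *v v) has_integral
      ((t *\<^sub>R Psi_mat (t *\<^sub>R A)) *v v - (0 *\<^sub>R Psi_mat (0 *\<^sub>R A)) *v v)) {0..t}"
    using assms by (intro fundamental_theorem_of_calculus bounded_linear.has_vector_derivative[OF
          bounded_bilinear.bounded_linear_left[OF bounded_bilinear_matrix_vector_mult]]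
        Psi_mat_has_vector_derivative) auto
  moreover have "mexp (s *\<^sub>R A) *v v = A *v ((s *\<^sub>R Psi_mat (s *\<^sub>R A)) *v v) + v" for s
    by (simp add: mexp_eq_Psi_mat[of s A] matrix_vector_mult_add_rdistrib matrix_vector_mul_assoc)
  ultimately show ?thesis
    by simp
qed

section \<open>The solution formula\<close>

definition open_loop_sol ::
  "real^'n^'n \<Rightarrow> real^'m^'n \<Rightarrow> (real \<Rightarrow> real^'m) \<Rightarrow> real^'n \<Rightarrow> real \<Rightarrow> real^'n" where
  "open_loop_sol A B w x0 t =
     mexp (t *\<^sub>R A) *v x0 + integral {0..t} (\<lambda>s. mexp ((t - s) *\<^sub>R A) *v (B *v w s))"

lemma solves_on_cong:
  assumes x: "solves_on A B E w z0 x0 T x" and eq: "\<And>t. t \<in> {0..T} \<Longrightarrow> y t = x t"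
  shows "solves_on A B E w z0 x0 T y"
  unfolding solves_on_def
proof
  fix t assume t: "t \<in> {0..T}"
  have "((\<lambda>s. A *v x s + B *v w s + E *v z0) has_integral (x t - x0)) {0..t}"
    using x t unfolding solves_on_def by blast
  moreover have "((\<lambda>s. A *v y s + B *v w s + E *v z0) has_integral (x t - x0)) {0..t}
      \<longleftrightarrow> ((\<lambda>s. A *v x s + B *v w s + E *v z0) has_integral (x t - x0)) {0..t}"
    using t by (intro has_integral_cong) (simp add: eq)
  ultimately show "((\<lambda>s. A *v y s + B *v w s + E *v z0) has_integral (y t - x0)) {0..t}"
    using t by (simp add: eq)
qed

lemma solves_on_unique:
  assumes x: "solves_on A B E w z0 x0 T x" and y: "solves_on A B E w z0 x0 T y"
    and t: "t \<in> {0..T}"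
  shows "x t = y t"
proof -
  have "((\<lambda>s. A *v (x s - y s)) has_integral (x \<tau> - y \<tau>)) {0..\<tau>}" if "\<tau> \<in> {0..T}" for \<tau>
    using has_integral_diff[OF x[unfolded solves_on_def, rule_format, OF that]
        y[unfolded solves_on_def, rule_format, OF that]]
    by (simp add: matrix_vector_mult_diff_distrib)
  from linear_integral_equation_zero[OF this t] show ?thesis
    by simp
qed

lemma solves_on_variation_of_constants:
  fixes A :: "real^'n^'n" and B :: "real^'m^'n" and E :: "real^'p^'n"
  assumes w: "integrable (lebesgue_on {0..T}) w"
  shows "solves_on A B E w z0 x0 T
    (\<lambda>t. open_loop_sol A B w x0 t + (t *\<^sub>R Psi_mat (t *\<^sub>R A)) *v (E *v z0))"
  unfolding solves_on_def
proof
  fix t assume t: "t \<in> {0..T}"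
  define Q where "Q s = s *\<^sub>R Psi_mat (s *\<^sub>R A)" for s
  have "w absolutely_integrable_on {0..T}"
    using w by (simp add: set_integrable_def integrable_restrict_space)
  then have "(\<lambda>s. B *v w s) absolutely_integrable_on {0..T}"
    using absolutely_integrable_linear[OF _ matrix_vector_mul_bounded_linear] by (auto simp: o_def)
  then have u: "(\<lambda>s. B *v w s) absolutely_integrable_on {0..t}"
    by (rule set_integrable_subset) (use t in auto)
  have free: "((\<lambda>s. A *v (mexp (s *\<^sub>R A) *v x0)) has_integral (mexp (t *\<^sub>R A) *v x0 - x0)) {0..t}"
    using t by (intro has_integral_mexp) simp
  have feedback: "((\<lambda>s. A *v (Q s *v (E *v z0)) + E *v z0) has_integral Q t *v (E *v z0)) {0..t}"
    unfolding Q_def using t by (intro has_integral_Psi_mat) simp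
  have "((\<lambda>s. A *v (mexp (s *\<^sub>R A) *v x0) + (A *v (Q s *v (E *v z0)) + E *v z0)
      + (A *v integral {0..s} (\<lambda>r. mexp ((s - r) *\<^sub>R A) *v (B *v w r)) + B *v w s)) has_integral
      (mexp (t *\<^sub>R A) *v x0 - x0) + Q t *v (E *v z0)
      + integral {0..t} (\<lambda>r. mexp ((t - r) *\<^sub>R A) *v (B *v w r))) {0..t}"
    by (intro has_integral_add free feedback variation_of_constants u)
  moreover have "(\<lambda>s. A *v (open_loop_sol A B w x0 s + Q s *v (E *v z0)) + B *v w s + E *v z0)
      = (\<lambda>s. A *v (mexp (s *\<^sub>R A) *v x0) + (A *v (Q s *v (E *v z0)) + E *v z0)
        + (A *v integral {0..s} (\<lambda>r. mexp ((s - r) *\<^sub>R A) *v (B *v w r)) + B *v w s))"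
    by (simp add: fun_eq_iff open_loop_sol_def matrix_vector_right_distrib ac_simps)
  moreover have "open_loop_sol A B w x0 t + Q t *v (E *v z0) - x0
      = (mexp (t *\<^sub>R A) *v x0 - x0) + Q t *v (E *v z0)
        + integral {0..t} (\<lambda>r. mexp ((t - r) *\<^sub>R A) *v (B *v w r))"
    by (simp add: open_loop_sol_def)
  ultimately show "((\<lambda>s. A *v (open_loop_sol A B w x0 s + (s *\<^sub>R Psi_mat (s *\<^sub>R A)) *v (E *v z0))
      + B *v w s + E *v z0) has_integral
      (open_loop_sol A B w x0 t + (t *\<^sub>R Psi_mat (t *\<^sub>R A)) *v (E *v z0) - x0)) {0..t}"
    by (simp only: Q_def)
qed

lemma sol_eq_variation_of_constants:
  fixes A :: "real^'n^'n" and B :: "real^'m^'n" and E :: "real^'p^'n"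
  assumes w: "integrable (lebesgue_on {0..T}) w" and t: "t \<in> {0..T}"
  shows "sol A B E w z0 x0 T t = open_loop_sol A B w x0 t + (t *\<^sub>R Psi_mat (t *\<^sub>R A)) *v (E *v z0)"
proof -
  let ?x = "\<lambda>t. open_loop_sol A B w x0 t + (t *\<^sub>R Psi_mat (t *\<^sub>R A)) *v (E *v z0)"
  let ?X = "\<lambda>t. if t \<in> {0..T} then ?x t else 0"
  have X: "solves_on A B E w z0 x0 T ?X"
    by (rule solves_on_cong[OF solves_on_variation_of_constants[OF w]]) simp
  have "sol A B E w z0 x0 T = ?X"
    unfolding sol_def
  proof (rule the_equality)
    show "solves_on A B E w z0 x0 T ?X \<and> (\<forall>t. t \<notin> {0..T} \<longrightarrow> ?X t = 0)"
      using X by simp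
    fix y assume y: "solves_on A B E w z0 x0 T y \<and> (\<forall>t. t \<notin> {0..T} \<longrightarrow> y t = 0)"
    show "y = ?X"
    proof
      fix t
      show "y t = ?X t"
      proof (cases "t \<in> {0..T}")
        case True
        then show ?thesis
          using solves_on_unique[OF conjunct1[OF y] X True] by simp
      next
        case False
        with y show ?thesis
          by auto
      qed
    qed
  qed
  with t show ?thesis
    by simp
qed

lemma translation_mem_iff:
  fixes a b :: "'a::ab_group_add"
  shows "a \<in> (\<lambda>\<theta>. b + \<theta>) ` S \<longleftrightarrow> a - b \<in> S"
  by (auto simp: image_iff intro: bexI[of _ "a - b"])

lemma matrix_inv_image_iff:
  fixes P :: "real^'n^'n"
  assumes "invertible P"
  shows "z \<in> (\<lambda>k. matrix_inv P *v k) ` S \<longleftrightarrow> P *v z \<in> S"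
proof -
  have "P ** matrix_inv P = mat 1" "matrix_inv P ** P = mat 1"
    using someI_ex[OF assms[unfolded invertible_def]] by (auto simp: matrix_inv_def)
  then show ?thesis
    by (auto simp: image_iff matrix_vector_mul_assoc intro: bexI[of _ "P *v z"])
qed

theorem theorem1:
  fixes A :: "real^'n^'n" and B :: "real^'m^'n" and C :: "real^'n^'p"
    and E :: "real^'p^'n" and \<Theta> :: "(real^'p) set"
    and w :: "real \<Rightarrow> real^'m" and x0 :: "real^'n" and T :: real
  assumes "T > 0"
    and "convex \<Theta>" and "compact \<Theta>"
    and "integrable (lebesgue_on {0..T}) w"
    and "\<forall>t\<in>{0..T}. invertible (mat 1 - t *\<^sub>R (C ** Psi_mat (t *\<^sub>R A) ** E))"
  shows "stationary_set A B C E \<Theta> w x0 T =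
    (\<Inter>t\<in>{0..T}.
       (\<lambda>k. matrix_inv (mat 1 - t *\<^sub>R (C ** Psi_mat (t *\<^sub>R A) ** E)) *v k) `
         ((\<lambda>\<theta>. C *v (mexp (t *\<^sub>R A) *v x0
                      + integral {0..t} (\<lambda>s. mexp ((t - s) *\<^sub>R A) *v (B *v w s))) + \<theta>) ` \<Theta>))"
proof -
  have "z0 \<in> (\<lambda>\<theta>. C *v sol A B E w z0 x0 T t + \<theta>) ` \<Theta> \<longleftrightarrow>
      z0 \<in> (\<lambda>k. matrix_inv (mat 1 - t *\<^sub>R (C ** Psi_mat (t *\<^sub>R A) ** E)) *v k) `
        ((\<lambda>\<theta>. C *v open_loop_sol A B w x0 t + \<theta>) ` \<Theta>)"
    if t: "t \<in> {0..T}" for z0 t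
  proof -
    have "(mat 1 - t *\<^sub>R (C ** Psi_mat (t *\<^sub>R A) ** E)) *v z0 - C *v open_loop_sol A B w x0 t
        = z0 - C *v sol A B E w z0 x0 T t"
      by (simp add: sol_eq_variation_of_constants[OF assms(4) t] matrix_vector_mult_diff_rdistrib
          matrix_vector_right_distrib matrix_vector_mul_assoc scalar_matrix_assoc matrix_scalar_ac
          matrix_mul_assoc flip: scaleR_matrix_vector_assoc)
    with assms(5) t show ?thesis
      by (simp add: matrix_inv_image_iff translation_mem_iff)
  qed
  then show ?thesis
    unfolding stationary_set_def open_loop_sol_def[symmetric] by (intro set_eqI) simp
qed

end
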